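(* For every $n\geq2$ and $c\geq1$, $|UD_n((1,1,c))|=n(n-1)(n^c-2^c)$.
   Context: Let $X$ be a finite alphabet with $n\geq 2$ letters and $X^*$ the set of words over $X$; $|v|$ is the length of a word $v$. A code over $X$ is a finite sequence $C=(v_1,\ldots,v_m)$ of words over $X$ such that every $w\in X^*$ has at most one factorization into code-words: if $w=v_{i_1}\cdots v_{i_l}=v_{j_1}\cdots v_{j_{l'}}$ with $l,l'\geq1$, then $l=l'$ and $i_t=j_t$ for all $t$. (Codes are sequences, not sets.) For a finite sequence $L=(a_1,\ldots,a_m)$ of positive integers, $UD_n(L)$ is the set of all codes $(v_1,\ldots,v_m)$ over an $n$-letter alphabet with $|v_i|=a_i$ for all $i$. *)

theory Defs
  imports Main
begin

definition word_over :: "nat \<Rightarrow> nat list \<Rightarrow> bool" where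
  "word_over n w \<longleftrightarrow> set w \<subseteq> {..<n}"

definition is_code :: "nat \<Rightarrow> nat list list \<Rightarrow> bool" where
  "is_code n C \<longleftrightarrow> (\<forall>v\<in>set C. word_over n v) \<and>
     (\<forall>is js. is \<noteq> [] \<longrightarrow> js \<noteq> [] \<longrightarrow>
        set is \<subseteq> {..<length C} \<longrightarrow> set js \<subseteq> {..<length C} \<longrightarrow>
        concat (map (\<lambda>i. C ! i) is) = concat (map (\<lambda>j. C ! j) js) \<longrightarrow> is = js)"

definition UD :: "nat \<Rightarrow> nat list \<Rightarrow> nat list list set" where
  "UD n L = {C. is_code n C \<and> length C = length L \<and>
                (\<forall>i<length L. length (C ! i) = L ! i)}"

end

theory Submission
  imports Defs
begin

text \<open>The code ([a], [b], w) is uniquely decodable exactly when a \<noteq> b and w contains a letter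
  other than a and b.  Sufficiency: a factorization is determined by its first factor, and the first
  factor is read off from the length of the longest {a, b}-prefix, which is that of w if the first
  factor is w and strictly longer otherwise.  Counting the ordered pairs a \<noteq> b and the words w of
  length c that are not over {a, b} gives n (n - 1) (n^c - 2^c).\<close>

lemma concat_map_nth_eq_imp_eq:
  assumes nonempty: "\<And>i. i \<in> I \<Longrightarrow> C ! i \<noteq> []"
    and first_factor: "\<And>i j xs ys. \<lbrakk>i \<in> I; j \<in> I; set xs \<subseteq> I; set ys \<subseteq> I;
        C ! i @ concat (map ((!) C) xs) = C ! j @ concat (map ((!) C) ys)\<rbrakk> \<Longrightarrow> i = j"
  shows "\<lbrakk>set ks \<subseteq> I; set js \<subseteq> I; concat (map ((!) C) ks) = concat (map ((!) C) js)\<rbrakk>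
    \<Longrightarrow> ks = js"
proof (induction ks arbitrary: js)
  case Nil
  then show ?case using nonempty by (cases js) auto
next
  case (Cons i ks)
  then obtain j js' where js: "js = j # js'" using nonempty by (cases js) auto
  with Cons.prems have "i = j" by (intro first_factor) auto
  with Cons js show ?case by auto
qed

lemma set_concat_letters_subset:
  "\<lbrakk>set xs \<subseteq> {..<3}; 2 \<notin> set xs\<rbrakk> \<Longrightarrow> set (concat (map ((!) [[a], [b], w]) xs)) \<subseteq> {a, b}"
  by (induction xs) (auto simp: less_Suc_eq numeral_3_eq_3)

lemma letter_prefix_ne_word_prefix:
  assumes w: "\<not> set w \<subseteq> {a, b}" and x: "x \<in> {a, b}" and xs: "set xs \<subseteq> {..<3}"
  shows "x # concat (map ((!) [[a], [b], w]) xs) \<noteq> w @ v"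
proof
  let ?C = "[[a], [b], w]" and ?P = "\<lambda>z. z \<in> {a, b}"
  assume eq: "x # concat (map ((!) ?C) xs) = w @ v"
  from w obtain z where z: "z \<in> set w" "\<not> ?P z" by auto
  then have prefix_w: "takeWhile ?P (w @ v') = takeWhile ?P w" for v'
    by (rule takeWhile_append1)
  show False
  proof (cases "2 \<in> set xs")
    case True
    then obtain xs1 xs2 where xs12: "xs = xs1 @ 2 # xs2" "2 \<notin> set xs1"
      using split_list_first by metis
    define u where "u = x # concat (map ((!) ?C) xs1)"
    let ?V = "concat (map ((!) ?C) xs2)"
    have "set u \<subseteq> {a, b}"
      using x xs xs12 set_concat_letters_subset[of xs1 a b w] unfolding u_def by auto
    \<comment> \<open>the {a, b}-word u in front of w would lengthen the longest {a, b}-prefix of w @ v\<close>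
    then have "takeWhile ?P (u @ w @ ?V) = u @ takeWhile ?P (w @ ?V)"
      by (intro takeWhile_append2) auto
    moreover have "u @ w @ ?V = w @ v"
      using eq xs12 unfolding u_def by simp
    ultimately have "takeWhile ?P w = u @ takeWhile ?P w"
      by (simp only: prefix_w)
    then show False by (simp add: u_def)
  next
    case False
    with x xs have "set (x # concat (map ((!) ?C) xs)) \<subseteq> {a, b}"
      using set_concat_letters_subset[of xs a b w] by auto
    with eq w show False by auto
  qed
qed

lemma first_factor_unique:
  assumes "a \<noteq> b" and w: "\<not> set w \<subseteq> {a, b}"
    and ij: "i < 3" "j < 3" and xs: "set xs \<subseteq> {..<3}" and ys: "set ys \<subseteq> {..<3}"
    and eq: "[[a], [b], w] ! i @ concat (map ((!) [[a], [b], w]) xs)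
           = [[a], [b], w] ! j @ concat (map ((!) [[a], [b], w]) ys)"
  shows "i = j"
proof (rule ccontr)
  assume "i \<noteq> j"
  with ij consider "i = 0" "j = 1" | "i = 1" "j = 0" | "i < 2" "j = 2" | "i = 2" "j < 2"
    by linarith
  then show False
  proof cases
    case 3
    then show False
      using letter_prefix_ne_word_prefix[OF w _ xs] eq by (auto simp: less_2_cases_iff)
  next
    case 4
    then show False
      using letter_prefix_ne_word_prefix[OF w _ ys] eq[symmetric] by (auto simp: less_2_cases_iff)
  qed (use eq \<open>a \<noteq> b\<close> in auto)
qed

lemma is_code_letters_word_iff:
  "is_code n [[a], [b], w] \<longleftrightarrow>
     a < n \<and> b < n \<and> set w \<subseteq> {..<n} \<and> a \<noteq> b \<and> \<not> set w \<subseteq> {a, b}"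
  (is "is_code n ?C \<longleftrightarrow> _")
proof
  assume code: "is_code n ?C"
  then have unique: "\<And>ks js. \<lbrakk>ks \<noteq> []; js \<noteq> []; set ks \<subseteq> {..<3}; set js \<subseteq> {..<3};
      concat (map ((!) ?C) ks) = concat (map ((!) ?C) js)\<rbrakk> \<Longrightarrow> ks = js"
    unfolding is_code_def by (simp add: numeral_3_eq_3)
  have "a \<noteq> b" using unique[of "[0]" "[1]"] by auto
  moreover have "\<not> set w \<subseteq> {a, b}"
  proof
    assume "set w \<subseteq> {a, b}"
    define js where "js = map (\<lambda>x. if x = a then 0 else 1 :: nat) w"
    have "map ((!) ?C) js = map (\<lambda>x. [x]) w"
      using \<open>set w \<subseteq> {a, b}\<close> unfolding js_def by auto
    then have two_parsings: "concat (map ((!) ?C) (js @ [2])) = concat (map ((!) ?C) [2, 2])"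
      by (simp add: concat_map_singleton)
    \<comment> \<open>reading w letter by letter gives a second factorization of w w\<close>
    have "js @ [2] = [2, 2]" by (rule unique[OF _ _ _ _ two_parsings]) (auto simp: js_def)
    then show False by (cases w) (auto simp: js_def split: if_splits)
  qed
  moreover have "\<forall>v\<in>set ?C. word_over n v"
    using code unfolding is_code_def by (rule conjunct1)
  ultimately show "a < n \<and> b < n \<and> set w \<subseteq> {..<n} \<and> a \<noteq> b \<and> \<not> set w \<subseteq> {a, b}"
    by (simp add: word_over_def)
next
  assume "a < n \<and> b < n \<and> set w \<subseteq> {..<n} \<and> a \<noteq> b \<and> \<not> set w \<subseteq> {a, b}"
  then have over: "a < n" "b < n" "set w \<subseteq> {..<n}" and ab: "a \<noteq> b"
    and w: "\<not> set w \<subseteq> {a, b}" by auto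
  have nonempty: "?C ! i \<noteq> []" if "i \<in> {..<3}" for i
    using that w by (auto simp: less_Suc_eq numeral_3_eq_3)
  have "ks = js" if "set ks \<subseteq> {..<3}" "set js \<subseteq> {..<3}"
    "concat (map ((!) ?C) ks) = concat (map ((!) ?C) js)" for ks js
    by (rule concat_map_nth_eq_imp_eq[OF nonempty _ that]) (auto intro: first_factor_unique[OF ab w])
  with over show "is_code n ?C"
    by (auto simp: is_code_def word_over_def numeral_3_eq_3)
qed

lemma UD_letters_word_eq:
  "UD n [1, 1, c] = (\<lambda>((a, b), w). [[a], [b], w]) `
     (SIGMA (a, b):{(a, b). a < n \<and> b < n \<and> a \<noteq> b}.
        {w. set w \<subseteq> {..<n} \<and> length w = c} - {w. set w \<subseteq> {a, b} \<and> length w = c})"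
proof -
  have UD_iff: "C \<in> UD n [1, 1, c] \<longleftrightarrow>
      (\<exists>a b w. C = [[a], [b], w] \<and> length w = c \<and> is_code n [[a], [b], w])" for C
  proof
    assume "C \<in> UD n [1, 1, c]"
    then have code: "is_code n C" and len: "length C = 3"
      and lens: "\<forall>i<3. length (C ! i) = [1, 1, c] ! i"
      by (simp_all add: UD_def)
    obtain x y w where C: "C = [x, y, w]"
      using len by (metis length_0_conv length_Suc_conv numeral_3_eq_3)
    have "length x = 1" "length y = 1" "length w = c"
      using lens[rule_format, of 0] lens[rule_format, of 1] lens[rule_format, of 2] C by simp_all
    then obtain a b where "x = [a]" "y = [b]" by (auto simp: length_Suc_conv)
    with C code \<open>length w = c\<close>
    show "\<exists>a b w. C = [[a], [b], w] \<and> length w = c \<and> is_code n [[a], [b], w]" by blast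
  next
    assume "\<exists>a b w. C = [[a], [b], w] \<and> length w = c \<and> is_code n [[a], [b], w]"
    then show "C \<in> UD n [1, 1, c]"
      by (auto simp: UD_def less_Suc_eq numeral_3_eq_3)
  qed
  show ?thesis
    unfolding set_eq_iff UD_iff is_code_letters_word_iff by (auto simp: image_iff)
qed

lemma card_off_diagonal:
  "card {(a, b). a < n \<and> b < n \<and> a \<noteq> b} = n * (n - 1)"
proof -
  have "{(a, b). a < n \<and> b < n \<and> a \<noteq> b} = {..<n} \<times> {..<n} - (\<lambda>a. (a, a)) ` {..<n}"
    by auto
  moreover have "card ((\<lambda>a. (a, a)) ` {..<n}) = n"
    by (simp add: card_image inj_on_def)
  ultimately show ?thesis
    by (simp add: card_Diff_subset card_cartesian_product image_subset_iff diff_mult_distrib2)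
qed

lemma card_words_not_over_pair:
  assumes "a < n" "b < n" "a \<noteq> b"
  shows "card ({w. set w \<subseteq> {..<n} \<and> length w = c} - {w. set w \<subseteq> {a, b} \<and> length w = c})
    = n ^ c - 2 ^ c"
proof -
  have "{w. set w \<subseteq> {a, b} \<and> length w = c} \<subseteq> {w. set w \<subseteq> {..<n} \<and> length w = c}"
    using assms by auto
  then show ?thesis
    using assms by (simp add: card_Diff_subset finite_lists_length_eq card_lists_length_eq numeral_2_eq_2)
qed

theorem proposition2:
  fixes n c :: nat
  assumes "n \<ge> 2" and "c \<ge> 1"
  shows "card (UD n [1, 1, c]) = n * (n - 1) * (n ^ c - 2 ^ c)"
proof -
  let ?P = "{(a, b). a < n \<and> b < n \<and> a \<noteq> b}"
  let ?W = "\<lambda>(a, b). {w. set w \<subseteq> {..<n} \<and> length w = c} - {w. set w \<subseteq> {a, b} \<and> length w = c}"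
  have "finite ?P" by (rule finite_subset[of _ "{..<n} \<times> {..<n}"]) auto
  have "card (UD n [1, 1, c]) = card (SIGMA p:?P. ?W p)"
    unfolding UD_letters_word_eq by (rule card_image) (auto simp: inj_on_def)
  also have "\<dots> = (\<Sum>p\<in>?P. card (?W p))"
    using \<open>finite ?P\<close> by (rule card_SigmaI) (auto simp: finite_lists_length_eq)
  also have "\<dots> = (\<Sum>p\<in>?P. n ^ c - 2 ^ c)"
    by (rule sum.cong) (auto simp: card_words_not_over_pair)
  also have "\<dots> = n * (n - 1) * (n ^ c - 2 ^ c)"
    by (simp add: card_off_diagonal)
  finally show ?thesis .
qed

end
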